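(* Suppose $F:L^1(0,T)\to\mathbb R$ is Fréchet differentiable and its derivative $\nabla F:L^1(0,T)\to L^\infty(0,T)$ is Lipschitz continuous with constant $L\ge0$. Let $u\in U_{ad}\cap\mathrm{BV}(0,T)$, $j\in\{2,\dots,d\}$ and $0<t_1<t_2<t_3<t_4<T$ be such that $u=\nu_j$ a.e. on $(t_2,t_3)$ and $u<\nu_j$ a.e. on $(t_1,t_2)\cup(t_3,t_4)$. If \[-2\beta-\int_{t_2}^{t_3}\nabla F(u)(s)\,ds+\frac L2(\nu_j-\nu_{j-1})(t_3-t_2)^2<0,\] then $v:=u+(\nu_{j-1}-\nu_j)\chi_{(t_2,t_3)}$ satisfies $F(v)+\beta\mathrm{TV}(v)<F(u)+\beta\mathrm{TV}(u)$.
   Context: $T>0$, $\beta>0$; $\nu_1<\dots<\nu_d$ are integers. $\mathrm{TV}(u):=\sup\{\int_0^T u\varphi'\,dt : \varphi\in C_c^1(0,T),\ \|\varphi\|_\infty\le 1\}$, $\mathrm{BV}(0,T)=\{u\in L^1(0,T):\mathrm{TV}(u)<\infty\}$. $U_{ad}:=\{u\in L^1(0,T): u(t)\in\{\nu_1,\dots,\nu_d\}\text{ a.e.}\}$. $\nabla F(u)\in L^\infty(0,T)$ denotes the function with $F'(u)h=\int_0^T\nabla F(u)h\,dt$ for all $h\in L^1(0,T)$. *)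

theory Defs
  imports "HOL-Analysis.Analysis"
begin

text \<open>The measure space ((0,T), Lebesgue); L^1(0,T) and L^infinity(0,T) are
  represented by functions real => real, identified only through this measure.\<close>

abbreviation Om :: "real \<Rightarrow> real measure" where
  "Om T \<equiv> lebesgue_on {0<..<T}"

definition L1 :: "real \<Rightarrow> (real \<Rightarrow> real) set" where
  "L1 T = {u. integrable (Om T) u}"

definition norm1 :: "real \<Rightarrow> (real \<Rightarrow> real) \<Rightarrow> real" where
  "norm1 T u = (\<integral>x. \<bar>u x\<bar> \<partial>Om T)"

definition Linf :: "real \<Rightarrow> (real \<Rightarrow> real) \<Rightarrow> bool" where
  "Linf T g \<longleftrightarrow> g \<in> borel_measurable (Om T) \<and> (\<exists>C. AE x in Om T. \<bar>g x\<bar> \<le> C)"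

definition frechet_grad ::
  "real \<Rightarrow> ((real \<Rightarrow> real) \<Rightarrow> real) \<Rightarrow> ((real \<Rightarrow> real) \<Rightarrow> (real \<Rightarrow> real)) \<Rightarrow> bool" where
  "frechet_grad T F G \<longleftrightarrow>
     (\<forall>u\<in>L1 T. Linf T (G u) \<and>
        (\<forall>\<epsilon>>0. \<exists>\<delta>>0. \<forall>h\<in>L1 T. norm1 T h < \<delta> \<longrightarrow>
           \<bar>F (\<lambda>x. u x + h x) - F u - (\<integral>x. G u x * h x \<partial>Om T)\<bar> \<le> \<epsilon> * norm1 T h))"

definition grad_lipschitz ::
  "real \<Rightarrow> ((real \<Rightarrow> real) \<Rightarrow> (real \<Rightarrow> real)) \<Rightarrow> real \<Rightarrow> bool" where
  "grad_lipschitz T G L \<longleftrightarrow>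
     (\<forall>u\<in>L1 T. \<forall>w\<in>L1 T. AE x in Om T. \<bar>G u x - G w x\<bar> \<le> L * norm1 T (\<lambda>y. u y - w y))"

definition test_fun :: "real \<Rightarrow> (real \<Rightarrow> real) \<Rightarrow> bool" where
  "test_fun T \<phi> \<longleftrightarrow> \<phi> C1_differentiable_on UNIV \<and>
     (\<exists>a b. 0 < a \<and> a \<le> b \<and> b < T \<and> (\<forall>x. x \<notin> {a..b} \<longrightarrow> \<phi> x = 0)) \<and>
     (\<forall>x. \<bar>\<phi> x\<bar> \<le> 1)"

definition TV :: "real \<Rightarrow> (real \<Rightarrow> real) \<Rightarrow> ereal" where
  "TV T u = (SUP \<phi>\<in>{\<phi>. test_fun T \<phi>}. ereal (\<integral>t. u t * deriv \<phi> t \<partial>Om T))"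

definition BV :: "real \<Rightarrow> (real \<Rightarrow> real) set" where
  "BV T = {u \<in> L1 T. TV T u < \<infinity>}"

definition Uad :: "real \<Rightarrow> nat \<Rightarrow> (nat \<Rightarrow> int) \<Rightarrow> (real \<Rightarrow> real) set" where
  "Uad T d \<nu> = {u \<in> L1 T. AE t in Om T. u t \<in> (\<lambda>i. real_of_int (\<nu> i)) ` {1..d}}"

end

theory Submission
  imports Defs
begin

text \<open>
  Let \<open>c = \<nu>\<^sub>j - \<nu>\<^sub>j\<^sub>-\<^sub>1 > 0\<close>, so that \<open>v = u - c\<close> on \<open>(t\<^sub>2, t\<^sub>3)\<close> and \<open>v = u\<close> elsewhere.
  Since \<open>\<nabla>F\<close> is \<open>L\<close>-Lipschitz, the descent lemma
  \<open>F(u + h) \<le> F(u) + \<integral>\<nabla>F(u) h + L/2 \<parallel>h\<parallel>\<^sub>1\<^sup>2\<close> gives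
  \<open>F(v) \<le> F(u) - c \<integral>\<^sub>t\<^sub>2\<^sup>t\<^sup>3 \<nabla>F(u) + L/2 (c (t\<^sub>3 - t\<^sub>2))\<^sup>2\<close>.
  For the total variation, \<open>u\<close> jumps up by at least \<open>c\<close> at \<open>t\<^sub>2\<close> and down by at least \<open>c\<close>
  at \<open>t\<^sub>3\<close>, because \<open>u \<le> \<nu>\<^sub>j\<^sub>-\<^sub>1\<close> next to \<open>(t\<^sub>2, t\<^sub>3)\<close>. Given a test function \<open>\<phi>\<close>, blend it
  in a \<open>\<delta>\<close>-neighbourhood of \<open>[t\<^sub>2, t\<^sub>3]\<close> into a ramp rising from \<open>-1\<close> at \<open>t\<^sub>2\<close> to \<open>1\<close> at
  \<open>t\<^sub>3\<close>. The resulting test function \<open>\<psi>\<close> satisfies \<open>\<integral>u\<psi>' \<ge> \<integral>v\<phi>' + 2c - O(\<delta>)\<close>, whence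
  \<open>TV(v) \<le> TV(u) - 2c\<close>. Adding \<open>\<beta>\<close> times this to the bound on \<open>F(v)\<close>, the total decrease
  is \<open>c\<close> times the negative quantity of the hypothesis.
\<close>

section \<open>A \<open>C\<^sup>1\<close> smooth step\<close>

definition unit_clamp :: "real \<Rightarrow> real" where
  "unit_clamp x = max 0 (min 1 x)"

definition smooth_step :: "real \<Rightarrow> real" where
  "smooth_step x = 3 * unit_clamp x ^ 2 - 2 * unit_clamp x ^ 3"

definition smooth_step' :: "real \<Rightarrow> real" where
  "smooth_step' x = 6 * unit_clamp x * (1 - unit_clamp x)"

lemma unit_clamp_bounds: "0 \<le> unit_clamp x" "unit_clamp x \<le> 1"
  by (auto simp: unit_clamp_def)

lemma smooth_step_factor: "smooth_step x = unit_clamp x ^ 2 * (3 - 2 * unit_clamp x)"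
  by (simp add: smooth_step_def power2_eq_square power3_eq_cube algebra_simps)

lemma one_minus_smooth_step_factor:
  "1 - smooth_step x = (1 - unit_clamp x) ^ 2 * (1 + 2 * unit_clamp x)"
  by (simp add: smooth_step_def power2_eq_square power3_eq_cube algebra_simps)

lemma smooth_step_bounds: "0 \<le> smooth_step x" "smooth_step x \<le> 1"
proof -
  show "0 \<le> smooth_step x"
    unfolding smooth_step_factor using unit_clamp_bounds[of x] by simp
  have "0 \<le> 1 - smooth_step x"
    unfolding one_minus_smooth_step_factor using unit_clamp_bounds[of x] by simp
  then show "smooth_step x \<le> 1" by simp
qed

lemma smooth_step'_nonneg: "0 \<le> smooth_step' x"
  using unit_clamp_bounds[of x] by (simp add: smooth_step'_def)

lemma smooth_step_below: "x \<le> 0 \<Longrightarrow> smooth_step x = 0" "x \<le> 0 \<Longrightarrow> smooth_step' x = 0"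
  by (auto simp: smooth_step_def smooth_step'_def unit_clamp_def)

lemma smooth_step_above: "1 \<le> x \<Longrightarrow> smooth_step x = 1" "1 \<le> x \<Longrightarrow> smooth_step' x = 0"
  by (auto simp: smooth_step_def smooth_step'_def unit_clamp_def)

lemma smooth_step_quadratic_at_0: "\<bar>smooth_step y\<bar> \<le> 3 * y ^ 2"
proof -
  have "\<bar>unit_clamp y\<bar> \<le> \<bar>y\<bar>" by (auto simp: unit_clamp_def)
  then have "unit_clamp y ^ 2 \<le> y ^ 2" by (simp add: abs_le_square_iff)
  moreover have "smooth_step y \<le> unit_clamp y ^ 2 * 3"
    unfolding smooth_step_factor using unit_clamp_bounds[of y] by (intro mult_left_mono) auto
  ultimately show ?thesis using smooth_step_bounds(1)[of y] by simp
qed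

lemma smooth_step_quadratic_at_1: "\<bar>smooth_step y - 1\<bar> \<le> 3 * (y - 1) ^ 2"
proof -
  have "\<bar>1 - unit_clamp y\<bar> \<le> \<bar>y - 1\<bar>" by (auto simp: unit_clamp_def)
  then have "(1 - unit_clamp y) ^ 2 \<le> (y - 1) ^ 2" by (simp add: abs_le_square_iff)
  moreover have "1 - smooth_step y \<le> (1 - unit_clamp y) ^ 2 * 3"
    unfolding one_minus_smooth_step_factor using unit_clamp_bounds[of y] by (intro mult_left_mono) auto
  ultimately show ?thesis using smooth_step_bounds(2)[of y] by simp
qed

lemma has_real_derivative_if_quadratic_remainder:
  fixes f :: "real \<Rightarrow> real"
  assumes "\<And>y. \<bar>f y - f x - D * (y - x)\<bar> \<le> C * (y - x) ^ 2"
  shows "(f has_real_derivative D) (at x)"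
  unfolding DERIV_def LIM_eq
proof (intro allI impI)
  fix r :: real assume r: "r > 0"
  have C0: "C \<ge> 0" using assms[of "x + 1"] by auto
  show "\<exists>s>0. \<forall>h. h \<noteq> 0 \<and> norm (h - 0) < s \<longrightarrow> norm ((f (x + h) - f x) / h - D) < r"
  proof (intro exI[of _ "r / (C + 1)"] conjI allI impI)
    show "r / (C + 1) > 0" using r C0 by auto
    fix h :: real assume h: "h \<noteq> 0 \<and> norm (h - 0) < r / (C + 1)"
    have "(f (x + h) - f x) / h - D = (f (x + h) - f x - D * ((x + h) - x)) / h"
      using h by (simp add: field_simps)
    then have "norm ((f (x + h) - f x) / h - D) = \<bar>f (x + h) - f x - D * ((x + h) - x)\<bar> / \<bar>h\<bar>"
      by (simp add: abs_divide)
    also have "\<dots> \<le> C * h ^ 2 / \<bar>h\<bar>" using assms[of "x + h"] by (intro divide_right_mono) auto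
    also have "\<dots> = C * \<bar>h\<bar>" using h by (simp add: power2_eq_square field_simps)
    also have "\<dots> \<le> C * (r / (C + 1))" using h C0 by (intro mult_left_mono) auto
    also have "\<dots> < r" using r C0 by (simp add: field_simps)
    finally show "norm ((f (x + h) - f x) / h - D) < r" .
  qed
qed

lemma smooth_step_has_real_derivative: "(smooth_step has_real_derivative smooth_step' x) (at x)"
proof -
  consider "x < 0" | "x = 0" | "0 < x \<and> x < 1" | "x = 1" | "1 < x" by linarith
  then show ?thesis
  proof cases
    case 1
    have "((\<lambda>_. 0) has_real_derivative 0) (at x)" by simp
    then have "(smooth_step has_real_derivative 0) (at x)"
      by (rule has_field_derivative_transform_within_open[where S = "{..<0}"])
         (use 1 in \<open>auto simp: smooth_step_below\<close>)
    with 1 show ?thesis by (simp add: smooth_step_below)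
  next
    case 2
    show ?thesis unfolding 2
      by (rule has_real_derivative_if_quadratic_remainder[where C = 3])
         (simp add: smooth_step_below smooth_step_quadratic_at_0)
  next
    case 3
    have "((\<lambda>y. 3 * y ^ 2 - 2 * y ^ 3) has_real_derivative 6 * x * (1 - x)) (at x)"
      by (auto intro!: derivative_eq_intros simp: algebra_simps power2_eq_square)
    then have "(smooth_step has_real_derivative 6 * x * (1 - x)) (at x)"
      by (rule has_field_derivative_transform_within_open[where S = "{0<..<1}"])
         (use 3 in \<open>auto simp: smooth_step_def unit_clamp_def\<close>)
    with 3 show ?thesis by (simp add: smooth_step'_def unit_clamp_def)
  next
    case 4
    show ?thesis unfolding 4
      by (rule has_real_derivative_if_quadratic_remainder[where C = 3])
         (simp add: smooth_step_above smooth_step_quadratic_at_1)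
  next
    case 5
    have "((\<lambda>_. 1) has_real_derivative 0) (at x)" by simp
    then have "(smooth_step has_real_derivative 0) (at x)"
      by (rule has_field_derivative_transform_within_open[where S = "{1<..}"])
         (use 5 in \<open>auto simp: smooth_step_above\<close>)
    with 5 show ?thesis by (simp add: smooth_step_above)
  qed
qed

lemma continuous_on_smooth_step: "continuous_on S g \<Longrightarrow> continuous_on S (\<lambda>x. smooth_step (g x))"
  unfolding smooth_step_def unit_clamp_def by (intro continuous_intros)

lemma continuous_on_smooth_step': "continuous_on S g \<Longrightarrow> continuous_on S (\<lambda>x. smooth_step' (g x))"
  unfolding smooth_step'_def unit_clamp_def by (intro continuous_intros)

section \<open>Lebesgue integrals on intervals\<close>

lemma integrable_mult_AE_bounded:
  fixes g h :: "'a \<Rightarrow> real"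
  assumes h: "integrable M h" and g: "g \<in> borel_measurable M" and C: "AE x in M. \<bar>g x\<bar> \<le> C"
  shows "integrable M (\<lambda>x. g x * h x)"
proof (rule Bochner_Integration.integrable_bound)
  show "integrable M (\<lambda>x. C * h x)" using h by simp
  show "(\<lambda>x. g x * h x) \<in> borel_measurable M" using g h by simp
  show "AE x in M. norm (g x * h x) \<le> norm (C * h x)"
    using C by eventually_elim (auto simp: abs_mult intro: mult_right_mono)
qed

lemma integrable_lebesgue_on_Ioo_continuous:
  fixes f :: "real \<Rightarrow> real"
  assumes f: "continuous_on {a..b} f"
  shows "integrable (lebesgue_on {a<..<b}) f"
proof -
  obtain B where B: "\<And>x. x \<in> {a..b} \<Longrightarrow> norm (f x) \<le> B"
    using continuous_on_compact_bound[OF compact_Icc f] by blast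
  show ?thesis
  proof (rule finite_measure.integrable_const_bound[OF finite_measure_lebesgue_on])
    show "AE x in lebesgue_on {a<..<b}. norm (f x) \<le> B"
      using B by (intro AE_I2) (auto simp: space_restrict_space)
    show "f \<in> borel_measurable (lebesgue_on {a<..<b})"
      using f by (intro continuous_imp_measurable_on_sets_lebesgue) (auto elim: continuous_on_subset)
  qed simp
qed

lemma integrable_lebesgue_on_Ioo_mult_continuous:
  fixes f u :: "real \<Rightarrow> real"
  assumes u: "integrable (lebesgue_on {a<..<b}) u" and f: "continuous_on {a..b} f"
  shows "integrable (lebesgue_on {a<..<b}) (\<lambda>x. u x * f x)"
proof -
  obtain B where B: "\<And>x. x \<in> {a..b} \<Longrightarrow> norm (f x) \<le> B"
    using continuous_on_compact_bound[OF compact_Icc f] by blast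
  have "integrable (lebesgue_on {a<..<b}) (\<lambda>x. f x * u x)"
  proof (rule integrable_mult_AE_bounded[OF u])
    show "f \<in> borel_measurable (lebesgue_on {a<..<b})"
      using f by (intro continuous_imp_measurable_on_sets_lebesgue) (auto elim: continuous_on_subset)
    show "AE x in lebesgue_on {a<..<b}. \<bar>f x\<bar> \<le> B"
      using B by (intro AE_I2) (auto simp: space_restrict_space)
  qed
  then show ?thesis by (simp add: mult.commute)
qed

lemma integral_lebesgue_on_Ioo_FTC:
  fixes f f' :: "real \<Rightarrow> real"
  assumes ab: "a \<le> b" and f: "\<And>x. x \<in> {a..b} \<Longrightarrow> (f has_real_derivative f' x) (at x)"
    and f': "continuous_on {a..b} f'"
  shows "integral\<^sup>L (lebesgue_on {a<..<b}) f' = f b - f a"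
proof -
  have "integral\<^sup>L (lebesgue_on {a<..<b}) f' = integral {a<..<b} f'"
    by (rule lebesgue_integral_eq_integral[OF integrable_lebesgue_on_Ioo_continuous[OF f']]) simp
  also have "\<dots> = integral {a..b} f'" by (simp add: integral_open_interval_real)
  also have "\<dots> = f b - f a"
    using ab f by (intro integral_unique fundamental_theorem_of_calculus)
      (auto simp: has_real_derivative_iff_has_vector_derivative has_vector_derivative_at_within)
  finally show ?thesis .
qed

lemma AE_lebesgue_on_neq:
  assumes "S \<in> sets lebesgue"
  shows "AE x in lebesgue_on S. x \<noteq> (c :: real)"
proof -
  have "AE x in lebesgue. x \<noteq> c" using AE_completion[OF AE_lborel_singleton[of c]] by simp
  then show ?thesis using assms by (subst AE_restrict_space_iff) (auto elim: eventually_mono)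
qed

lemma AE_lebesgue_on_mem: "AE x in lebesgue_on S. x \<in> S"
  by (rule AE_I2) (auto simp: space_restrict_space)

lemma integral_lebesgue_on_indicator_mult:
  fixes f :: "real \<Rightarrow> real"
  assumes "A \<subseteq> S" "A \<in> sets lebesgue" "S \<in> sets lebesgue"
  shows "(\<integral>x. indicator A x * f x \<partial>lebesgue_on S) = integral\<^sup>L (lebesgue_on A) f"
proof -
  have "(\<lambda>x. indicator A x * f x) = (\<lambda>x. if x \<in> A then f x else 0)" by auto
  then show ?thesis using integral_restrict[OF assms] by simp
qed

lemma integrable_lebesgue_on_indicator_mult:
  fixes f :: "real \<Rightarrow> real"
  assumes "A \<subseteq> S" "A \<in> sets lebesgue" "S \<in> sets lebesgue" "integrable (lebesgue_on S) f"
  shows "integrable (lebesgue_on S) (\<lambda>x. indicator A x * f x)"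
  using integrable_mult_indicator[of A "lebesgue_on S" f] assms
  by (auto simp: sets_restrict_space_iff)

lemma integral_lebesgue_on_indicator_Ioo:
  fixes a b :: real
  assumes "{a<..<b} \<subseteq> S" "S \<in> sets lebesgue" "a \<le> b"
  shows "(\<integral>x. indicator {a<..<b} x \<partial>lebesgue_on S) = b - a"
  using integral_lebesgue_on_indicator_mult[of "{a<..<b}" S "\<lambda>_. 1"] assms
  by (simp add: measure_restrict_space)

section \<open>The descent lemma\<close>

lemma L1_add_scaled: "u \<in> L1 T \<Longrightarrow> h \<in> L1 T \<Longrightarrow> (\<lambda>x. u x + s * h x) \<in> L1 T"
  by (simp add: L1_def)

lemma norm1_nonneg: "0 \<le> norm1 T h"
  by (simp add: norm1_def)

lemma norm1_scale: "norm1 T (\<lambda>x. r * h x) = \<bar>r\<bar> * norm1 T h"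
  by (simp add: norm1_def abs_mult)

lemma frechet_grad_integrable:
  assumes "frechet_grad T F G" "w \<in> L1 T" "h \<in> L1 T"
  shows "integrable (Om T) (\<lambda>x. G w x * h x)"
proof -
  obtain C where "G w \<in> borel_measurable (Om T)" "AE x in Om T. \<bar>G w x\<bar> \<le> C"
    using assms(1,2) by (auto simp: frechet_grad_def Linf_def)
  then show ?thesis using assms(3) by (auto simp: L1_def intro: integrable_mult_AE_bounded)
qed

lemma frechet_gradD:
  assumes "frechet_grad T F G" "u \<in> L1 T" "\<epsilon> > 0"
  obtains \<delta> where "\<delta> > 0" "\<And>h. h \<in> L1 T \<Longrightarrow> norm1 T h < \<delta> \<Longrightarrow>
    \<bar>F (\<lambda>x. u x + h x) - F u - (\<integral>x. G u x * h x \<partial>Om T)\<bar> \<le> \<epsilon> * norm1 T h"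
proof -
  have "\<forall>\<epsilon>>0. \<exists>\<delta>>0. \<forall>h\<in>L1 T. norm1 T h < \<delta> \<longrightarrow>
      \<bar>F (\<lambda>x. u x + h x) - F u - (\<integral>x. G u x * h x \<partial>Om T)\<bar> \<le> \<epsilon> * norm1 T h"
    using assms(1,2) by (simp add: frechet_grad_def)
  then show ?thesis using that assms(3) by meson
qed

lemma frechet_grad_has_real_derivative_along_line:
  assumes fg: "frechet_grad T F G" and u: "u \<in> L1 T" and h: "h \<in> L1 T"
  shows "((\<lambda>s. F (\<lambda>x. u x + s * h x)) has_real_derivative
           (\<integral>x. G (\<lambda>x. u x + s * h x) x * h x \<partial>Om T)) (at s)"
  unfolding DERIV_def LIM_eq
proof (intro allI impI)
  define w where "w = (\<lambda>x. u x + s * h x)"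
  define g' where "g' = (\<integral>x. G w x * h x \<partial>Om T)"
  define N where "N = norm1 T h"
  have N: "0 \<le> N" by (simp add: N_def norm1_nonneg)
  fix r :: real assume r: "r > 0"
  then have "r / (N + 1) > 0" using N by simp
  then obtain \<delta> where \<delta>: "\<delta> > 0" and est: "\<And>k. k \<in> L1 T \<Longrightarrow> norm1 T k < \<delta> \<Longrightarrow>
       \<bar>F (\<lambda>x. w x + k x) - F w - (\<integral>x. G w x * k x \<partial>Om T)\<bar> \<le> r / (N + 1) * norm1 T k"
    using frechet_gradD[OF fg L1_add_scaled[OF u h, of s]] unfolding w_def by blast
  show "\<exists>\<rho>>0. \<forall>t. t \<noteq> 0 \<and> norm (t - 0) < \<rho> \<longrightarrow>
      norm ((F (\<lambda>x. u x + (s + t) * h x) - F (\<lambda>x. u x + s * h x)) / t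
        - (\<integral>x. G (\<lambda>x. u x + s * h x) x * h x \<partial>Om T)) < r"
    unfolding w_def[symmetric] g'_def[symmetric]
  proof (intro exI[of _ "\<delta> / (N + 1)"] conjI allI impI)
    show "\<delta> / (N + 1) > 0" using \<delta> N by simp
    fix t :: real assume t: "t \<noteq> 0 \<and> norm (t - 0) < \<delta> / (N + 1)"
    have "norm1 T (\<lambda>x. t * h x) = \<bar>t\<bar> * N" by (simp add: norm1_scale N_def)
    also have "\<dots> \<le> \<bar>t\<bar> * (N + 1)" by (intro mult_left_mono) auto
    also have "\<dots> < \<delta>" using t N by (simp add: field_simps)
    finally have "norm1 T (\<lambda>x. t * h x) < \<delta>" .
    then have "\<bar>F (\<lambda>x. w x + t * h x) - F w - t * g'\<bar> \<le> r / (N + 1) * (\<bar>t\<bar> * N)"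
      using est[of "\<lambda>x. t * h x"] h by (simp add: L1_def norm1_scale N_def g'_def mult.left_commute)
    moreover have "(\<lambda>x. w x + t * h x) = (\<lambda>x. u x + (s + t) * h x)"
      by (auto simp: w_def algebra_simps)
    ultimately have "\<bar>F (\<lambda>x. u x + (s + t) * h x) - F w - t * g'\<bar> / \<bar>t\<bar> \<le> r / (N + 1) * N"
      using t by (simp add: divide_le_eq mult_ac)
    also have "\<dots> < r" using r N by (simp add: field_simps)
    finally have "\<bar>F (\<lambda>x. u x + (s + t) * h x) - F w - t * g'\<bar> / \<bar>t\<bar> < r" .
    moreover have "(F (\<lambda>x. u x + (s + t) * h x) - F w) / t - g'
        = (F (\<lambda>x. u x + (s + t) * h x) - F w - t * g') / t"
      using t by (simp add: field_simps)
    ultimately show "norm ((F (\<lambda>x. u x + (s + t) * h x) - F w) / t - g') < r"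
      by (simp add: abs_divide)
  qed
qed

lemma grad_lipschitz_along_line:
  assumes fg: "frechet_grad T F G" and gl: "grad_lipschitz T G L"
    and u: "u \<in> L1 T" and h: "h \<in> L1 T" and s: "0 \<le> s"
  shows "(\<integral>x. G (\<lambda>x. u x + s * h x) x * h x \<partial>Om T) - (\<integral>x. G u x * h x \<partial>Om T)
           \<le> L * s * norm1 T h ^ 2"
proof -
  define w where "w = (\<lambda>x. u x + s * h x)"
  have w: "w \<in> L1 T" unfolding w_def by (rule L1_add_scaled[OF u h])
  have "norm1 T (\<lambda>y. w y - u y) = s * norm1 T h"
    using norm1_scale[of T s h] s by (simp add: w_def)
  moreover have "AE x in Om T. \<bar>G w x - G u x\<bar> \<le> L * norm1 T (\<lambda>y. w y - u y)"
    using gl w u unfolding grad_lipschitz_def by blast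
  ultimately have diff: "AE x in Om T. \<bar>G w x - G u x\<bar> \<le> L * (s * norm1 T h)" by simp
  have "(\<integral>x. G w x * h x \<partial>Om T) - (\<integral>x. G u x * h x \<partial>Om T) = (\<integral>x. (G w x - G u x) * h x \<partial>Om T)"
    using frechet_grad_integrable[OF fg w h] frechet_grad_integrable[OF fg u h]
    by (simp add: left_diff_distrib)
  also have "\<dots> \<le> (\<integral>x. L * (s * norm1 T h) * \<bar>h x\<bar> \<partial>Om T)"
  proof (rule integral_mono_AE)
    show "integrable (Om T) (\<lambda>x. (G w x - G u x) * h x)"
      using frechet_grad_integrable[OF fg w h] frechet_grad_integrable[OF fg u h]
      by (simp add: left_diff_distrib)
    show "integrable (Om T) (\<lambda>x. L * (s * norm1 T h) * \<bar>h x\<bar>)" using h by (simp add: L1_def)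
    show "AE x in Om T. (G w x - G u x) * h x \<le> L * (s * norm1 T h) * \<bar>h x\<bar>"
      using diff
    proof eventually_elim
      case (elim x)
      have "(G w x - G u x) * h x \<le> \<bar>G w x - G u x\<bar> * \<bar>h x\<bar>" by (metis abs_ge_self abs_mult)
      also have "\<dots> \<le> L * (s * norm1 T h) * \<bar>h x\<bar>" using elim by (intro mult_right_mono) auto
      finally show ?case .
    qed
  qed
  also have "\<dots> = L * s * norm1 T h ^ 2" by (simp add: norm1_def power2_eq_square)
  finally show ?thesis unfolding w_def .
qed

lemma descent_lemma:
  assumes fg: "frechet_grad T F G" and gl: "grad_lipschitz T G L"
    and u: "u \<in> L1 T" and h: "h \<in> L1 T"
  shows "F (\<lambda>x. u x + h x) \<le> F u + (\<integral>x. G u x * h x \<partial>Om T) + L / 2 * norm1 T h ^ 2"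
proof -
  define g' where "g' s = (\<integral>x. G (\<lambda>x. u x + s * h x) x * h x \<partial>Om T)" for s
  define \<phi> where "\<phi> s = F (\<lambda>x. u x + s * h x) - s * g' 0 - L / 2 * s ^ 2 * norm1 T h ^ 2" for s
  have "\<phi> 1 \<le> \<phi> 0"
  proof (rule DERIV_nonpos_imp_nonincreasing[of 0 1 \<phi>])
    fix s :: real assume s: "0 \<le> s" "s \<le> 1"
    have "(\<phi> has_real_derivative g' s - g' 0 - L * s * norm1 T h ^ 2) (at s)"
      unfolding \<phi>_def g'_def
      by (auto intro!: derivative_eq_intros frechet_grad_has_real_derivative_along_line[OF fg u h])
    moreover have "g' s - g' 0 - L * s * norm1 T h ^ 2 \<le> 0"
      using grad_lipschitz_along_line[OF fg gl u h s(1)] by (simp add: g'_def)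
    ultimately show "\<exists>y. (\<phi> has_real_derivative y) (at s) \<and> y \<le> 0" by blast
  qed simp
  then show ?thesis by (simp add: \<phi>_def g'_def)
qed

section \<open>Total variation across a plateau\<close>

lemma test_fun_has_derivative:
  assumes "test_fun T \<phi>"
  obtains D where "\<And>x. (\<phi> has_real_derivative D x) (at x)" "continuous_on UNIV D"
  using assms unfolding test_fun_def C1_differentiable_on_def
  by (auto simp: has_real_derivative_iff_has_vector_derivative)

lemma test_fun_vanishes_at_ends: "test_fun T \<phi> \<Longrightarrow> \<phi> 0 = 0 \<and> \<phi> T = 0"
  unfolding test_fun_def by force

lemma integral_le_TV:
  assumes "test_fun T \<phi>"
  shows "ereal (\<integral>x. u x * deriv \<phi> x \<partial>Om T) \<le> TV T u"
  unfolding TV_def by (rule SUP_upper) (use assms in simp)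

lemma TV_nonneg:
  assumes "T > 0"
  shows "0 \<le> TV T u"
proof -
  have "test_fun T (\<lambda>_. 0)" unfolding test_fun_def using assms by (auto intro!: exI[of _ "T / 2"])
  from integral_le_TV[OF this, of u] show ?thesis by (simp add: zero_ereal_def)
qed

definition plateau :: "real \<Rightarrow> real \<Rightarrow> real \<Rightarrow> real \<Rightarrow> real" where
  "plateau \<delta> a b x = smooth_step ((x - a + \<delta>) / \<delta>) + smooth_step ((b + \<delta> - x) / \<delta>) - 1"

definition plateau' :: "real \<Rightarrow> real \<Rightarrow> real \<Rightarrow> real \<Rightarrow> real" where
  "plateau' \<delta> a b x = smooth_step' ((x - a + \<delta>) / \<delta>) / \<delta> - smooth_step' ((b + \<delta> - x) / \<delta>) / \<delta>"

definition ramp :: "real \<Rightarrow> real \<Rightarrow> real \<Rightarrow> real" where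
  "ramp a b x = 2 * smooth_step ((x - a) / (b - a)) - 1"

definition ramp' :: "real \<Rightarrow> real \<Rightarrow> real \<Rightarrow> real" where
  "ramp' a b x = 2 * smooth_step' ((x - a) / (b - a)) / (b - a)"

lemma plateau_has_real_derivative:
  "0 < \<delta> \<Longrightarrow> (plateau \<delta> a b has_real_derivative plateau' \<delta> a b x) (at x)"
  unfolding plateau_def plateau'_def
  by (auto intro!: derivative_eq_intros DERIV_chain2[OF smooth_step_has_real_derivative]
      simp: field_simps)

lemma ramp_has_real_derivative:
  assumes "a < b"
  shows "(ramp a b has_real_derivative ramp' a b x) (at x)"
proof -
  have "((\<lambda>x. (x - a) / (b - a)) has_real_derivative 1 / (b - a)) (at x)"
    using assms by (auto intro!: derivative_eq_intros)
  from DERIV_chain2[OF smooth_step_has_real_derivative this]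
  have "(ramp a b has_real_derivative 2 * (smooth_step' ((x - a) / (b - a)) * (1 / (b - a))) - 0) (at x)"
    unfolding ramp_def by (intro DERIV_diff DERIV_cmult DERIV_const)
  then show ?thesis by (simp add: ramp'_def)
qed

lemma continuous_on_plateau_ramp:
  assumes "0 < \<delta>" "a < b"
  shows "continuous_on S (plateau \<delta> a b)" "continuous_on S (plateau' \<delta> a b)"
    "continuous_on S (ramp a b)" "continuous_on S (ramp' a b)"
  unfolding plateau_def plateau'_def ramp_def ramp'_def using assms
  by (auto intro!: continuous_intros continuous_on_smooth_step continuous_on_smooth_step')

lemma plateau_outside:
  "0 < \<delta> \<Longrightarrow> a < b \<Longrightarrow> x \<le> a - \<delta> \<or> b + \<delta> \<le> x \<Longrightarrow>
    plateau \<delta> a b x = 0 \<and> plateau' \<delta> a b x = 0"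
  by (auto simp: plateau_def plateau'_def smooth_step_below smooth_step_above
      divide_le_0_iff le_divide_eq_1)

lemma plateau_inside:
  "0 < \<delta> \<Longrightarrow> a \<le> x \<Longrightarrow> x \<le> b \<Longrightarrow> plateau \<delta> a b x = 1 \<and> plateau' \<delta> a b x = 0"
  by (auto simp: plateau_def plateau'_def smooth_step_above le_divide_eq_1)

lemma plateau'_nonneg_left: "0 < \<delta> \<Longrightarrow> x \<le> a \<Longrightarrow> a \<le> b \<Longrightarrow> 0 \<le> plateau' \<delta> a b x"
  by (auto simp: plateau'_def smooth_step_above le_divide_eq_1 smooth_step'_nonneg)

lemma plateau'_nonpos_right: "0 < \<delta> \<Longrightarrow> b \<le> x \<Longrightarrow> a \<le> b \<Longrightarrow> plateau' \<delta> a b x \<le> 0"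
  by (auto simp: plateau'_def smooth_step_above le_divide_eq_1 smooth_step'_nonneg)

lemma plateau_bounds: "0 < \<delta> \<Longrightarrow> a \<le> b \<Longrightarrow> 0 \<le> plateau \<delta> a b x \<and> plateau \<delta> a b x \<le> 1"
  using smooth_step_bounds[of "(x - a + \<delta>) / \<delta>"] smooth_step_bounds[of "(b + \<delta> - x) / \<delta>"]
  by (cases "x \<le> b") (auto simp: plateau_def smooth_step_above le_divide_eq_1)

lemma ramp_left: "a < b \<Longrightarrow> x \<le> a \<Longrightarrow> ramp a b x = -1 \<and> ramp' a b x = 0"
  by (auto simp: ramp_def ramp'_def smooth_step_below divide_le_0_iff)

lemma ramp_right: "a < b \<Longrightarrow> b \<le> x \<Longrightarrow> ramp a b x = 1 \<and> ramp' a b x = 0"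
  by (auto simp: ramp_def ramp'_def smooth_step_above le_divide_eq_1)

lemma ramp_bound: "\<bar>ramp a b x\<bar> \<le> 1"
  using smooth_step_bounds[of "(x - a) / (b - a)"] by (simp add: ramp_def)

text \<open>On \<open>[a, b]\<close> the patched test function is the ramp, which climbs from \<open>-1\<close> to \<open>1\<close> and
  so sees both jumps of \<open>u\<close>; off \<open>[a - \<delta>, b + \<delta>]\<close> it is \<open>\<phi>\<close>. The parameter \<open>D\<close> of \<open>patch'\<close>
  is the derivative of \<open>\<phi>\<close>.\<close>

definition patch :: "real \<Rightarrow> real \<Rightarrow> real \<Rightarrow> (real \<Rightarrow> real) \<Rightarrow> real \<Rightarrow> real" where
  "patch \<delta> a b \<phi> x = (1 - plateau \<delta> a b x) * \<phi> x + plateau \<delta> a b x * ramp a b x"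

definition patch' :: "real \<Rightarrow> real \<Rightarrow> real \<Rightarrow> (real \<Rightarrow> real) \<Rightarrow> (real \<Rightarrow> real) \<Rightarrow> real \<Rightarrow> real" where
  "patch' \<delta> a b \<phi> D x = (1 - plateau \<delta> a b x) * D x + plateau' \<delta> a b x * (ramp a b x - \<phi> x)
     + plateau \<delta> a b x * ramp' a b x"

lemma patch_has_real_derivative:
  assumes "0 < \<delta>" "a < b" "\<And>x. (\<phi> has_real_derivative D x) (at x)"
  shows "(patch \<delta> a b \<phi> has_real_derivative patch' \<delta> a b \<phi> D x) (at x)"
proof -
  have "((\<lambda>x. (1 - plateau \<delta> a b x) * \<phi> x + plateau \<delta> a b x * ramp a b x) has_real_derivative
      (0 - plateau' \<delta> a b x) * \<phi> x + D x * (1 - plateau \<delta> a b x)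
      + (plateau' \<delta> a b x * ramp a b x + ramp' a b x * plateau \<delta> a b x)) (at x)"
    by (intro DERIV_add DERIV_mult DERIV_diff DERIV_const assms(3)
        plateau_has_real_derivative[OF assms(1)] ramp_has_real_derivative[OF assms(2)])
  then show ?thesis unfolding patch_def patch'_def by (simp add: algebra_simps)
qed

lemma continuous_on_patch':
  assumes "0 < \<delta>" "a < b" "\<And>x. (\<phi> has_real_derivative D x) (at x)" "continuous_on S D"
  shows "continuous_on S (patch' \<delta> a b \<phi> D)"
proof -
  have "continuous_on S \<phi>"
    using assms(3) by (meson DERIV_isCont continuous_at_imp_continuous_on)
  then show ?thesis
    using continuous_on_plateau_ramp[OF assms(1,2)] assms(4) unfolding patch'_def
    by (intro continuous_intros)
qed

lemma patch_at_ends: "0 < \<delta> \<Longrightarrow> a < b \<Longrightarrow> patch \<delta> a b \<phi> a = -1 \<and> patch \<delta> a b \<phi> b = 1"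
  using plateau_inside[of \<delta> a a b] plateau_inside[of \<delta> a b b] ramp_left[of a b a] ramp_right[of a b b]
  by (simp add: patch_def)

lemma test_fun_patch:
  assumes \<delta>: "0 < \<delta>" "0 < a - \<delta>" "b + \<delta> < T" and ab: "a < b"
    and \<phi>: "test_fun T \<phi>" "\<And>x. (\<phi> has_real_derivative D x) (at x)" "continuous_on UNIV D"
  shows "test_fun T (patch \<delta> a b \<phi>)"
  unfolding test_fun_def
proof (intro conjI)
  show "patch \<delta> a b \<phi> C1_differentiable_on UNIV"
    unfolding C1_differentiable_on_def
    using patch_has_real_derivative[OF \<delta>(1) ab \<phi>(2)] continuous_on_patch'[OF \<delta>(1) ab \<phi>(2,3)]
    by (auto simp: has_real_derivative_iff_has_vector_derivative)
  obtain c d where cd: "0 < c" "c \<le> d" "d < T" "\<And>x. x \<notin> {c..d} \<Longrightarrow> \<phi> x = 0"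
    using \<phi>(1) unfolding test_fun_def by blast
  have "patch \<delta> a b \<phi> x = 0" if "x \<notin> {min c (a - \<delta>)..max d (b + \<delta>)}" for x
  proof -
    have "x \<le> a - \<delta> \<or> b + \<delta> \<le> x" "x \<notin> {c..d}" using that by auto
    then show ?thesis using plateau_outside[OF \<delta>(1) ab, of x] cd(4)[of x] by (simp add: patch_def)
  qed
  moreover have "0 < min c (a - \<delta>)" "min c (a - \<delta>) \<le> max d (b + \<delta>)" "max d (b + \<delta>) < T"
    using cd \<delta> ab by auto
  ultimately show "\<exists>c d. 0 < c \<and> c \<le> d \<and> d < T \<and> (\<forall>x. x \<notin> {c..d} \<longrightarrow> patch \<delta> a b \<phi> x = 0)"
    by blast
  show "\<forall>x. \<bar>patch \<delta> a b \<phi> x\<bar> \<le> 1"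
  proof
    fix x
    have \<chi>: "0 \<le> plateau \<delta> a b x" "plateau \<delta> a b x \<le> 1" using plateau_bounds[OF \<delta>(1)] ab by auto
    have "\<bar>\<phi> x\<bar> \<le> 1" using \<phi>(1) by (simp add: test_fun_def)
    then have "\<bar>patch \<delta> a b \<phi> x\<bar> \<le> (1 - plateau \<delta> a b x) * 1 + plateau \<delta> a b x * 1"
      using \<chi> ramp_bound[of a b x] unfolding patch_def
      by (intro order_trans[OF abs_triangle_ineq] add_mono) (auto simp: abs_mult mult_left_le)
    then show "\<bar>patch \<delta> a b \<phi> x\<bar> \<le> 1" by simp
  qed
qed

lemma patch'_pointwise_bound:
  fixes u \<phi> D :: "real \<Rightarrow> real"
  assumes \<delta>: "0 < \<delta>" and ab: "a < b" and x: "x \<noteq> a" "x \<noteq> b"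
    and \<phi>: "\<bar>\<phi> x\<bar> \<le> 1" and D: "\<bar>D x\<bar> \<le> B" and K: "\<bar>u x - M\<bar> \<le> K"
    and mid: "x \<in> {a<..<b} \<Longrightarrow> u x = M + c"
    and side: "x \<in> {a - \<delta><..<a} \<union> {b<..<b + \<delta>} \<Longrightarrow> u x \<le> M"
  shows "c * (indicator {a<..<b} x * patch' \<delta> a b \<phi> D x)
           - K * B * indicator {a - \<delta><..<a} x - K * B * indicator {b<..<b + \<delta>} x
           + M * (patch' \<delta> a b \<phi> D x - D x)
         \<le> u x * patch' \<delta> a b \<phi> D x - (u x - c * indicator {a<..<b} x) * D x"
proof -
  define \<kappa> where "\<kappa> = plateau \<delta> a b x"
  define \<kappa>' where "\<kappa>' = plateau' \<delta> a b x"
  define \<rho> where "\<rho> = ramp a b x"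
  define \<rho>' where "\<rho>' = ramp' a b x"
  have \<kappa>: "0 \<le> \<kappa>" "\<kappa> \<le> 1" using plateau_bounds[OF \<delta>] ab by (auto simp: \<kappa>_def)
  have expand: "u x * patch' \<delta> a b \<phi> D x - (u x - c * indicator {a<..<b} x) * D x
      - M * (patch' \<delta> a b \<phi> D x - D x)
      = (u x - M) * \<kappa>' * (\<rho> - \<phi> x) + (u x - M) * \<kappa> * \<rho>' - (u x - M) * \<kappa> * D x
        + c * indicator {a<..<b} x * D x"
    by (simp add: patch'_def \<kappa>_def \<kappa>'_def \<rho>_def \<rho>'_def algebra_simps)
  \<comment> \<open>Only the term \<open>(u x - M) * \<kappa> * D x\<close> can be negative off \<open>(a, b)\<close>; it costs at most \<open>K B\<close>.\<close>
  have "\<bar>(u x - M) * \<kappa> * D x\<bar> \<le> K * 1 * B"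
    unfolding abs_mult using K D \<kappa> by (intro mult_mono) auto
  then have KB: "- K * B \<le> - (u x - M) * \<kappa> * D x" by linarith
  consider "x \<le> a - \<delta> \<or> b + \<delta> \<le> x" | "x \<in> {a - \<delta><..<a}" | "x \<in> {a<..<b}" | "x \<in> {b<..<b + \<delta>}"
    using x by force
  then show ?thesis
  proof cases
    case 1
    then have "\<kappa> = 0" "\<kappa>' = 0" using plateau_outside[OF \<delta> ab] by (auto simp: \<kappa>_def \<kappa>'_def)
    moreover have "x \<notin> {a<..<b} \<union> {a - \<delta><..<a} \<union> {b<..<b + \<delta>}" using 1 \<delta> ab by auto
    ultimately show ?thesis using expand by simp
  next
    case 2
    then have "0 \<le> \<kappa>'" "\<rho> = -1" "\<rho>' = 0"
      using plateau'_nonneg_left[OF \<delta>, of x a b] ramp_left[OF ab, of x] ab by (auto simp: \<kappa>'_def \<rho>_def \<rho>'_def)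
    moreover have "x \<notin> {a<..<b}" "x \<notin> {b<..<b + \<delta>}" using 2 ab by auto
    moreover have "0 \<le> (M - u x) * \<kappa>' * (1 + \<phi> x)" using side 2 \<phi> \<open>0 \<le> \<kappa>'\<close> by auto
    ultimately show ?thesis using expand KB 2 by (simp add: algebra_simps)
  next
    case 3
    then have "\<kappa> = 1" "\<kappa>' = 0" using plateau_inside[OF \<delta>, of a x b] by (auto simp: \<kappa>_def \<kappa>'_def)
    moreover have "x \<notin> {a - \<delta><..<a}" "x \<notin> {b<..<b + \<delta>}" using 3 by auto
    moreover have "patch' \<delta> a b \<phi> D x = \<rho>'"
      using \<open>\<kappa> = 1\<close> \<open>\<kappa>' = 0\<close> by (simp add: patch'_def \<kappa>_def \<kappa>'_def \<rho>'_def)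
    ultimately show ?thesis using expand mid 3 by (simp add: algebra_simps)
  next
    case 4
    then have "\<kappa>' \<le> 0" "\<rho> = 1" "\<rho>' = 0"
      using plateau'_nonpos_right[OF \<delta>, of b x a] ramp_right[OF ab, of x] ab by (auto simp: \<kappa>'_def \<rho>_def \<rho>'_def)
    moreover have "x \<notin> {a<..<b}" "x \<notin> {a - \<delta><..<a}" using 4 ab by auto
    moreover have "0 \<le> (M - u x) * (- \<kappa>') * (1 - \<phi> x)"
      using side 4 \<phi> \<open>\<kappa>' \<le> 0\<close> by (intro mult_nonneg_nonneg) auto
    ultimately show ?thesis using expand KB 4 by (simp add: algebra_simps)
  qed
qed

lemma integral_derivative_test_fun:
  assumes "test_fun T \<psi>" "\<And>x. (\<psi> has_real_derivative \<psi>' x) (at x)" "continuous_on UNIV \<psi>'"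
  shows "(\<integral>x. \<psi>' x \<partial>Om T) = 0"
proof -
  have "0 < T" using assms(1) by (auto simp: test_fun_def)
  then show ?thesis
    using integral_lebesgue_on_Ioo_FTC[of 0 T \<psi> \<psi>'] test_fun_vanishes_at_ends[OF assms(1)] assms(2)
      continuous_on_subset[OF assms(3) subset_UNIV] by simp
qed

lemma integral_patch'_on_plateau:
  assumes "0 < \<delta>" "a < b" "{a<..<b} \<subseteq> {0<..<T}"
    and "\<And>x. (\<phi> has_real_derivative D x) (at x)" "continuous_on UNIV D"
  shows "(\<integral>x. indicator {a<..<b} x * patch' \<delta> a b \<phi> D x \<partial>Om T) = 2"
proof -
  have "(\<integral>x. indicator {a<..<b} x * patch' \<delta> a b \<phi> D x \<partial>Om T)
      = integral\<^sup>L (lebesgue_on {a<..<b}) (patch' \<delta> a b \<phi> D)"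
    using assms(3) by (intro integral_lebesgue_on_indicator_mult) auto
  also have "\<dots> = patch \<delta> a b \<phi> b - patch \<delta> a b \<phi> a"
    using assms(1,2) patch_has_real_derivative[OF assms(1,2,4)]
      continuous_on_patch'[OF assms(1,2,4) continuous_on_subset[OF assms(5) subset_UNIV]]
    by (intro integral_lebesgue_on_Ioo_FTC) auto
  finally show ?thesis using patch_at_ends[OF assms(1,2)] by simp
qed

lemma integral_mult_patch'_lower_bound:
  fixes u \<phi> D :: "real \<Rightarrow> real"
  assumes \<delta>: "0 < \<delta>" "0 < a - \<delta>" "b + \<delta> < T" and ab: "a < b"
    and \<phi>: "test_fun T \<phi>" "\<And>x. (\<phi> has_real_derivative D x) (at x)" "continuous_on UNIV D"
    and B: "\<And>x. x \<in> {0..T} \<Longrightarrow> \<bar>D x\<bar> \<le> B"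
    and u: "u \<in> L1 T" and K: "AE x in Om T. \<bar>u x - M\<bar> \<le> K"
    and mid: "AE x in Om T. x \<in> {a<..<b} \<longrightarrow> u x = M + c"
    and side: "AE x in Om T. x \<in> {a - \<delta><..<a} \<union> {b<..<b + \<delta>} \<longrightarrow> u x \<le> M"
  shows "(\<integral>x. (u x - c * indicator {a<..<b} x) * D x \<partial>Om T) + 2 * c - 2 * K * B * \<delta>
           \<le> (\<integral>x. u x * patch' \<delta> a b \<phi> D x \<partial>Om T)"
proof -
  define p' where "p' = patch' \<delta> a b \<phi> D"
  define I where "I = (\<lambda>(A :: real set) x. indicator A x :: real)"
  define R where "R x = c * (I {a<..<b} x * p' x) - K * B * I {a - \<delta><..<a} x
    - K * B * I {b<..<b + \<delta>} x + M * (p' x - D x)" for x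
  have Om: "{0<..<T} \<in> sets lebesgue" by simp
  have sub: "{a<..<b} \<subseteq> {0<..<T}" "{a - \<delta><..<a} \<subseteq> {0<..<T}" "{b<..<b + \<delta>} \<subseteq> {0<..<T}"
    using \<delta> ab by auto
  have p'_cont: "continuous_on UNIV p'" unfolding p'_def by (rule continuous_on_patch'[OF \<delta>(1) ab \<phi>(2,3)])
  have u: "integrable (Om T) u" using u by (simp add: L1_def)
  have p': "integrable (Om T) p'" "integrable (Om T) (\<lambda>x. u x * p' x)"
    using continuous_on_subset[OF p'_cont subset_UNIV]
    by (auto intro: integrable_lebesgue_on_Ioo_continuous integrable_lebesgue_on_Ioo_mult_continuous[OF u])
  have D: "integrable (Om T) D" "integrable (Om T) (\<lambda>x. u x * D x)"
    using continuous_on_subset[OF \<phi>(3) subset_UNIV]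
    by (auto intro: integrable_lebesgue_on_Ioo_continuous integrable_lebesgue_on_Ioo_mult_continuous[OF u])
  have ind: "integrable (Om T) (\<lambda>x. I A x * f x)" if "A \<subseteq> {0<..<T}" "A \<in> sets lebesgue"
    "integrable (Om T) f" for A and f :: "real \<Rightarrow> real"
    unfolding I_def using that by (intro integrable_lebesgue_on_indicator_mult) auto
  have one: "integrable (Om T) (\<lambda>_. 1 :: real)"
    by (rule finite_measure.integrable_const[OF finite_measure_lebesgue_on]) simp
  have "2 * c - 2 * K * B * \<delta> = (\<integral>x. R x \<partial>Om T)"
  proof -
    have "(\<integral>x. I {a - \<delta><..<a} x \<partial>Om T) = a - (a - \<delta>)"
      unfolding I_def by (rule integral_lebesgue_on_indicator_Ioo[OF sub(2)]) (use \<delta> in auto)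
    moreover have "(\<integral>x. I {b<..<b + \<delta>} x \<partial>Om T) = (b + \<delta>) - b"
      unfolding I_def by (rule integral_lebesgue_on_indicator_Ioo[OF sub(3)]) (use \<delta> in auto)
    moreover have "(\<integral>x. I {a<..<b} x * p' x \<partial>Om T) = 2"
      unfolding I_def p'_def using integral_patch'_on_plateau[OF \<delta>(1) ab sub(1) \<phi>(2,3)] .
    moreover have "(\<integral>x. p' x \<partial>Om T) = 0" "(\<integral>x. D x \<partial>Om T) = 0"
      using integral_derivative_test_fun[OF test_fun_patch[OF \<delta> ab \<phi>]
          patch_has_real_derivative[OF \<delta>(1) ab \<phi>(2)] p'_cont[unfolded p'_def]]
        integral_derivative_test_fun[OF \<phi>] by (simp_all add: p'_def)
    ultimately show ?thesis
      using ind[OF sub(1) _ p'(1)] ind[OF sub(2) _ one] ind[OF sub(3) _ one] p'(1) D(1)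
      unfolding R_def by (simp add: algebra_simps)
  qed
  also have "\<dots> \<le> (\<integral>x. u x * p' x - (u x - c * I {a<..<b} x) * D x \<partial>Om T)"
  proof (rule integral_mono_AE)
    show "integrable (Om T) R"
      using ind[OF sub(1) _ p'(1)] ind[OF sub(2) _ one] ind[OF sub(3) _ one] p'(1) D(1)
      unfolding R_def by simp
    show "integrable (Om T) (\<lambda>x. u x * p' x - (u x - c * I {a<..<b} x) * D x)"
      using p'(2) D(2) ind[OF sub(1) _ D(1)] by (simp add: algebra_simps)
    show "AE x in Om T. R x \<le> u x * p' x - (u x - c * I {a<..<b} x) * D x"
      using K mid side AE_lebesgue_on_neq[OF Om, of a] AE_lebesgue_on_neq[OF Om, of b]
        AE_lebesgue_on_mem[of "{0<..<T}"]
    proof eventually_elim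
      case (elim x)
      then show ?case
        unfolding R_def I_def p'_def
        using patch'_pointwise_bound[OF \<delta>(1) ab, of x \<phi> D B u M K c] \<phi>(1) B[of x]
        by (auto simp: test_fun_def)
    qed
  qed
  finally show ?thesis using p'(2) D(2) ind[OF sub(1) _ D(1)]
    by (simp add: I_def p'_def algebra_simps)
qed

lemma TV_subtract_plateau:
  fixes u :: "real \<Rightarrow> real"
  assumes t: "0 < t1" "t1 < t2" "t2 < t3" "t3 < t4" "t4 < T"
    and u: "u \<in> L1 T" and K: "AE x in Om T. \<bar>u x - M\<bar> \<le> K"
    and mid: "AE x in Om T. x \<in> {t2<..<t3} \<longrightarrow> u x = M + c"
    and side: "AE x in Om T. x \<in> {t1<..<t2} \<union> {t3<..<t4} \<longrightarrow> u x \<le> M"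
    and TVu: "TV T u = ereal r"
  shows "TV T (\<lambda>x. u x - c * indicator {t2<..<t3} x) \<le> ereal (r - 2 * c)"
  unfolding TV_def
proof (rule SUP_least)
  fix \<phi> assume "\<phi> \<in> {\<phi>. test_fun T \<phi>}"
  then have \<phi>: "test_fun T \<phi>" by simp
  obtain D where D: "\<And>x. (\<phi> has_real_derivative D x) (at x)" "continuous_on UNIV D"
    using test_fun_has_derivative[OF \<phi>] by blast
  obtain B where B: "0 \<le> B" "\<And>x. x \<in> {0..T} \<Longrightarrow> norm (D x) \<le> B"
    using continuous_on_compact_bound[OF compact_Icc continuous_on_subset[OF D(2) subset_UNIV]] by blast
  define K' where "K' = max K 0"
  have K': "AE x in Om T. \<bar>u x - M\<bar> \<le> K'" using K by eventually_elim (auto simp: K'_def)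
  define Q where "Q = 2 * K' * B"
  have Q: "0 \<le> Q" using B(1) by (simp add: Q_def K'_def)
  define X where "X = (\<integral>x. (u x - c * indicator {t2<..<t3} x) * D x \<partial>Om T)"
  have "X + 2 * c \<le> r"
  proof (rule field_le_epsilon)
    fix e :: real assume e: "0 < e"
    define \<delta> where "\<delta> = min (min (t2 - t1) (t4 - t3)) (e / (Q + 1))"
    have \<delta>: "0 < \<delta>" "0 < t2 - \<delta>" "t3 + \<delta> < T" using t e Q by (auto simp: \<delta>_def)
    have "Q * \<delta> \<le> Q * (e / (Q + 1))" using Q by (intro mult_left_mono) (auto simp: \<delta>_def)
    also have "\<dots> \<le> e" using Q e by (simp add: field_simps)
    finally have small: "Q * \<delta> \<le> e" .
    have side\<delta>: "AE x in Om T. x \<in> {t2 - \<delta><..<t2} \<union> {t3<..<t3 + \<delta>} \<longrightarrow> u x \<le> M"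
      using side by eventually_elim (auto simp: \<delta>_def)
    have "X + 2 * c - Q * \<delta> \<le> (\<integral>x. u x * patch' \<delta> t2 t3 \<phi> D x \<partial>Om T)"
      unfolding X_def Q_def using integral_mult_patch'_lower_bound[OF \<delta> t(3) \<phi> D _ u K' mid side\<delta>] B(2)
      by (simp add: mult.assoc)
    also have "\<dots> = (\<integral>x. u x * deriv (patch \<delta> t2 t3 \<phi>) x \<partial>Om T)"
      using DERIV_imp_deriv[OF patch_has_real_derivative[OF \<delta>(1) t(3) D(1)]] by simp
    also have "ereal \<dots> \<le> TV T u"
      by (rule integral_le_TV[OF test_fun_patch[OF \<delta> t(3) \<phi> D]])
    finally show "X + 2 * c \<le> r + e" using TVu small by simp
  qed
  moreover have "(\<integral>x. (u x - c * indicator {t2<..<t3} x) * deriv \<phi> x \<partial>Om T) = X"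
    unfolding X_def using DERIV_imp_deriv[OF D(1)] by simp
  ultimately show "ereal (\<integral>x. (u x - c * indicator {t2<..<t3} x) * deriv \<phi> x \<partial>Om T) \<le> ereal (r - 2 * c)"
    by simp
qed

lemma BV_TV_finite:
  assumes "T > 0" "u \<in> BV T"
  obtains r where "TV T u = ereal r"
  using assms TV_nonneg[OF assms(1), of u] by (cases "TV T u") (auto simp: BV_def)

lemma descent_lemma_indicator:
  assumes fg: "frechet_grad T F G" and gl: "grad_lipschitz T G L"
    and u: "u \<in> L1 T" and ab: "0 \<le> a" "a \<le> b" "b \<le> T"
  shows "F (\<lambda>x. u x + c * indicator {a<..<b} x)
           \<le> F u + c * (\<integral>x. G u x \<partial>lebesgue_on {a<..<b}) + L / 2 * (c * (b - a)) ^ 2"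
proof -
  have sub: "{a<..<b} \<subseteq> {0<..<T}" using ab by auto
  have h: "(\<lambda>x. c * indicator {a<..<b} x) \<in> L1 T"
    using integrable_lebesgue_on_indicator_mult[OF sub _ _
        finite_measure.integrable_const[OF finite_measure_lebesgue_on, of "{0<..<T}" 1]]
    by (simp add: L1_def)
  have "norm1 T (\<lambda>x. c * indicator {a<..<b} x) = \<bar>c\<bar> * (b - a)"
    using integral_lebesgue_on_indicator_Ioo[OF sub _ ab(2)] by (simp add: norm1_scale norm1_def)
  moreover have "(\<integral>x. G u x * (c * indicator {a<..<b} x) \<partial>Om T) = c * (\<integral>x. G u x \<partial>lebesgue_on {a<..<b})"
    using integral_lebesgue_on_indicator_mult[OF sub, of "G u"] by (simp add: mult_ac)
  ultimately show ?thesis using descent_lemma[OF fg gl u h] by (simp add: power_mult_distrib)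
qed

lemma Uad_AE_bounded:
  assumes "u \<in> Uad T d \<nu>"
  obtains K where "AE x in Om T. \<bar>u x - m\<bar> \<le> K"
proof
  show "AE x in Om T. \<bar>u x - m\<bar> \<le> (\<Sum>i\<in>{1..d}. \<bar>real_of_int (\<nu> i)\<bar>) + \<bar>m\<bar>"
    using assms unfolding Uad_def
  proof (clarify, eventually_elim)
    case (elim x)
    then obtain i where i: "i \<in> {1..d}" "u x = real_of_int (\<nu> i)" by auto
    have "\<bar>real_of_int (\<nu> i)\<bar> \<le> (\<Sum>i\<in>{1..d}. \<bar>real_of_int (\<nu> i)\<bar>)"
      by (rule member_le_sum[OF i(1)]) auto
    then show ?case using i by linarith
  qed
qed

lemma Uad_AE_le_lower_level:
  assumes u: "u \<in> Uad T d \<nu>" and \<nu>: "strict_mono_on {1..d} \<nu>" and j: "j \<in> {2..d}"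
    and below: "AE x in Om T. x \<in> S \<longrightarrow> u x < real_of_int (\<nu> j)"
  shows "AE x in Om T. x \<in> S \<longrightarrow> u x \<le> real_of_int (\<nu> (j - 1))"
proof -
  have "AE x in Om T. u x \<in> (\<lambda>i. real_of_int (\<nu> i)) ` {1..d}" using u by (simp add: Uad_def)
  with below show ?thesis
  proof eventually_elim
    case (elim x)
    show ?case
    proof
      assume "x \<in> S"
      obtain i where i: "i \<in> {1..d}" "u x = real_of_int (\<nu> i)" using elim(2) by auto
      with elim(1) \<open>x \<in> S\<close> have "\<nu> i < \<nu> j" by simp
      then have "i \<le> j - 1" using strict_mono_on_leD[OF \<nu>, of j i] i(1) j by force
      moreover have "j - 1 \<in> {1..d}" using j by auto
      ultimately have "\<nu> i \<le> \<nu> (j - 1)" using strict_mono_on_leD[OF \<nu> i(1)] by blast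
      then show "u x \<le> real_of_int (\<nu> (j - 1))" using i by simp
    qed
  qed
qed

theorem theorem3p12:
  fixes T \<beta> L t1 t2 t3 t4 :: real and d j :: nat and \<nu> :: "nat \<Rightarrow> int"
    and F :: "(real \<Rightarrow> real) \<Rightarrow> real" and G :: "(real \<Rightarrow> real) \<Rightarrow> (real \<Rightarrow> real)"
    and u :: "real \<Rightarrow> real"
  assumes "T > 0" and "\<beta> > 0"
    and "strict_mono_on {1..d} \<nu>"
    and "frechet_grad T F G"
    and "L \<ge> 0" and "grad_lipschitz T G L"
    and "u \<in> Uad T d \<nu>" and "u \<in> BV T"
    and "j \<in> {2..d}"
    and "0 < t1" and "t1 < t2" and "t2 < t3" and "t3 < t4" and "t4 < T"
    and "AE t in Om T. t \<in> {t2<..<t3} \<longrightarrow> u t = real_of_int (\<nu> j)"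
    and "AE t in Om T. t \<in> {t1<..<t2} \<union> {t3<..<t4} \<longrightarrow> u t < real_of_int (\<nu> j)"
    and "- 2 * \<beta> - (\<integral>s. G u s \<partial>lebesgue_on {t2<..<t3})
         + L / 2 * real_of_int (\<nu> j - \<nu> (j - 1)) * (t3 - t2)^2 < 0"
  shows "ereal (F (\<lambda>t. u t + real_of_int (\<nu> (j - 1) - \<nu> j) * indicator {t2<..<t3} t))
           + ereal \<beta> * TV T (\<lambda>t. u t + real_of_int (\<nu> (j - 1) - \<nu> j) * indicator {t2<..<t3} t)
         < ereal (F u) + ereal \<beta> * TV T u"
proof -
  define M where "M = real_of_int (\<nu> (j - 1))"
  define c where "c = real_of_int (\<nu> j - \<nu> (j - 1))"
  define I where "I = (\<integral>s. G u s \<partial>lebesgue_on {t2<..<t3})"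
  define v where "v = (\<lambda>t. u t + real_of_int (\<nu> (j - 1) - \<nu> j) * indicator {t2<..<t3} t)"
  have c: "0 < c" using strict_mono_onD[OF assms(3), of "j - 1" j] assms(9) by (auto simp: c_def)
  have u: "u \<in> L1 T" using assms(7) by (simp add: Uad_def)
  obtain K where K: "AE x in Om T. \<bar>u x - M\<bar> \<le> K" using Uad_AE_bounded[OF assms(7)] by blast
  have mid: "AE x in Om T. x \<in> {t2<..<t3} \<longrightarrow> u x = M + c"
    using assms(15) by eventually_elim (simp add: M_def c_def)
  have side: "AE x in Om T. x \<in> {t1<..<t2} \<union> {t3<..<t4} \<longrightarrow> u x \<le> M"
    unfolding M_def by (rule Uad_AE_le_lower_level[OF assms(7,3,9,16)])
  obtain r where r: "TV T u = ereal r" using BV_TV_finite[OF assms(1,8)] by blast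
  have "v = (\<lambda>x. u x - c * indicator {t2<..<t3} x)" by (auto simp: v_def c_def algebra_simps)
  then have TV: "TV T v \<le> ereal (r - 2 * c)"
    using TV_subtract_plateau[OF assms(10-14) u K mid side r] by simp
  have "real_of_int (\<nu> (j - 1) - \<nu> j) = - c" by (simp add: c_def)
  then have F: "F v \<le> F u + (- c) * I + L / 2 * (- c * (t3 - t2)) ^ 2"
    unfolding v_def I_def using descent_lemma_indicator[OF assms(4,6) u, of t2 t3 "- c"] assms(10-14)
    by simp
  have "c * (- 2 * \<beta> - I + L / 2 * c * (t3 - t2) ^ 2) < 0"
    using assms(17) c by (intro mult_pos_neg) (auto simp: I_def c_def)
  then have "F v + \<beta> * (r - 2 * c) < F u + \<beta> * r"
    using F by (simp add: algebra_simps power2_eq_square)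
  moreover have "ereal \<beta> * TV T v \<le> ereal (\<beta> * (r - 2 * c))"
    using ereal_mult_left_mono[OF TV, of "ereal \<beta>"] assms(2) by simp
  ultimately have "ereal (F v) + ereal \<beta> * TV T v < ereal (F u) + ereal \<beta> * TV T u"
    using r by (auto intro: add_left_mono order.strict_trans1)
  then show ?thesis unfolding v_def .
qed

end
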